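(* Consider the Lazy Trajectory Optimization (LTO) planner on a configuration space $\mathcal{X}$ normalized to $[0,1]^d$, $d\in\mathbb{N}$, which is partitioned into a uniform grid of $K^d$ voxels ($K$ intervals along each axis), with one graph vertex per voxel, and in which two vertices are joined by an edge if the $\ell_\infty$ distance between the centers of their voxels is at most $r$, where $r=i/K$ for some $i\in\{0,1,\dots,K\}$. Then the TO-aware time complexity of LTO, i.e. the number of trajectory-optimization (TO) problems it solves, is $O\big((2i+1)^d K^d\big)$.
   Context: LTO is a graph-search planner (a variant of lazy weighted A* ) over an a priori unknown graph $\mathcal{G}=(V,E)$. Each vertex represents a robot state and each edge a robot trajectory between two vertex states. The true configuration of a vertex is obtained by solving a short-horizon trajectory optimization problem (a mixed-integer convex program) restricted to that vertex's voxel, and the true trajectory of an edge is obtained by solving a trajectory optimization problem restricted to the hypercube of voxels spanned by the two endpoint voxels. LTO solves a TO problem for a vertex or an edge only when it needs it, and reuses the result if the same vertex configuration or the same configuration pair has already been solved, so each vertex and each edge requires at most one TO solve. The "TO-aware time complexity" measures running time by the number of TO problems solved. *)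

theory Defs
  imports Main "HOL.Real"
begin

text \<open>Voxels of the uniform grid on [0,1]^d with K intervals per axis:
  integer index vectors (j_1,...,j_d) with 0 <= j_k < K.\<close>
type_synonym voxel = "nat list"

definition voxels :: "nat \<Rightarrow> nat \<Rightarrow> voxel set" where
  "voxels d K = {v. length v = d \<and> (\<forall>k<d. v ! k < K)}"

definition voxel_center :: "nat \<Rightarrow> voxel \<Rightarrow> nat \<Rightarrow> real" where
  "voxel_center K v k = (real (v ! k) + 1/2) / real K"

definition linf_center_dist :: "nat \<Rightarrow> nat \<Rightarrow> voxel \<Rightarrow> voxel \<Rightarrow> real" where
  "linf_center_dist d K u v =
     Max ({\<bar>voxel_center K u k - voxel_center K v k\<bar> | k. k < d} \<union> {0})"

definition lto_edges :: "nat \<Rightarrow> nat \<Rightarrow> real \<Rightarrow> voxel set set" where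
  "lto_edges d K r = {{u, v} | u v. u \<in> voxels d K \<and> v \<in> voxels d K \<and> u \<noteq> v
                                    \<and> linf_center_dist d K u v \<le> r}"

datatype to_problem = Vertex_TO voxel | Edge_TO "voxel set"

definition lto_graph_problems :: "nat \<Rightarrow> nat \<Rightarrow> real \<Rightarrow> to_problem set" where
  "lto_graph_problems d K r = Vertex_TO ` voxels d K \<union> Edge_TO ` lto_edges d K r"

text \<open>Abstraction of an LTO run: the sequence of TO problems it solves. LTO only solves TO
  problems for vertices and edges of the graph, and by reuse of results each vertex and each
  edge is solved at most once (the list has no repetitions).\<close>
definition lto_TO_log :: "nat \<Rightarrow> nat \<Rightarrow> real \<Rightarrow> to_problem list \<Rightarrow> bool" where
  "lto_TO_log d K r log \<longleftrightarrow> distinct log \<and> set log \<subseteq> lto_graph_problems d K r"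

definition TO_aware_time :: "to_problem list \<Rightarrow> nat" where
  "TO_aware_time log = length log"

end

theory Submission
  imports Defs
begin

text \<open>Every TO problem of a run is a vertex or an edge problem, and none is solved twice, so the
  run length is bounded by the number of vertices plus the number of edges. There are \<open>K^d\<close>
  vertices. A centre distance of at most \<open>i/K\<close> means that the index vectors differ by at most
  \<open>i\<close> in every coordinate, so each edge \<open>{u, v}\<close> has \<open>v\<close> in the cube of \<open>(2i+1)^d\<close> index
  vectors around \<open>u\<close>; hence there are at most \<open>(2i+1)^d K^d\<close> edges.\<close>

lemma voxels_eq_lists: "voxels d K = {xs. set xs \<subseteq> {0..<K} \<and> length xs = d}"
  unfolding voxels_def by (auto simp: in_set_conv_nth subset_iff)

lemma finite_voxels: "finite (voxels d K)"
  unfolding voxels_eq_lists by (rule finite_lists_length_eq) simp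

lemma card_voxels: "card (voxels d K) = K ^ d"
  unfolding voxels_eq_lists by (subst card_lists_length_eq) simp_all

lemma voxel_center_diff:
  "voxel_center K u k - voxel_center K v k = (real (u ! k) - real (v ! k)) / real K"
  unfolding voxel_center_def by (simp add: add_divide_distrib diff_divide_distrib)

lemma linf_center_dist_ge:
  assumes "k < d"
  shows "\<bar>voxel_center K u k - voxel_center K v k\<bar> \<le> linf_center_dist d K u v"
proof -
  have "{\<bar>voxel_center K u k - voxel_center K v k\<bar> | k. k < d}
          = (\<lambda>k. \<bar>voxel_center K u k - voxel_center K v k\<bar>) ` {..<d}"
    by auto
  then show ?thesis
    unfolding linf_center_dist_def using assms by (intro Max_ge) auto
qed

lemma index_dist_le_if_linf_center_dist_le:
  assumes "linf_center_dist d K u v \<le> r" and "0 < K" and "k < d"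
  shows "\<bar>real (u ! k) - real (v ! k)\<bar> \<le> r * real K"
proof -
  have "\<bar>real (u ! k) - real (v ! k)\<bar> / real K \<le> r"
    using linf_center_dist_ge[OF \<open>k < d\<close>, of K u v] assms(1)
    by (simp add: voxel_center_diff)
  then show ?thesis
    using \<open>0 < K\<close> by (simp add: divide_le_eq)
qed

definition index_box :: "nat \<Rightarrow> nat \<Rightarrow> voxel \<Rightarrow> voxel set" where
  "index_box d i u = {v. length v = d \<and> (\<forall>k<d. \<bar>int (v ! k) - int (u ! k)\<bar> \<le> int i)}"

lemma finite_index_box_card_le:
  "finite (index_box d i u) \<and> card (index_box d i u) \<le> (2 * i + 1) ^ d"
proof -
  define offsets where "offsets v = map (\<lambda>k. int (v ! k) - int (u ! k)) [0..<d]" for v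
  define L where "L = {xs. set xs \<subseteq> {- int i..int i} \<and> length xs = d}"
  have "finite L"
    unfolding L_def by (rule finite_lists_length_eq) simp
  have "card L = (2 * i + 1) ^ d"
  proof -
    have "nat (2 * int i + 1) = 2 * i + 1" by linarith
    then show ?thesis
      unfolding L_def by (subst card_lists_length_eq) simp_all
  qed
  have inj: "inj_on offsets (index_box d i u)"
  proof
    fix v w
    assume "v \<in> index_box d i u" "w \<in> index_box d i u" "offsets v = offsets w"
    then show "v = w"
      unfolding index_box_def offsets_def
      by (auto intro!: nth_equalityI dest!: map_eq_conv[THEN iffD1, rotated])
  qed
  have "offsets ` index_box d i u \<subseteq> L"
    unfolding index_box_def L_def offsets_def by (force simp: in_set_conv_nth abs_le_iff)
  then show ?thesis
    using inj_on_finite[OF inj _ \<open>finite L\<close>] card_inj_on_le[OF inj _ \<open>finite L\<close>]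
      \<open>card L = (2 * i + 1) ^ d\<close>
    by simp
qed

lemma lto_edges_subset_index_boxes:
  assumes "0 < K"
  shows "lto_edges d K (real i / real K)
           \<subseteq> (\<lambda>(u, v). {u, v}) ` (SIGMA u:voxels d K. index_box d i u)"
proof
  fix e
  assume "e \<in> lto_edges d K (real i / real K)"
  then obtain u v where e: "e = {u, v}" and uv: "u \<in> voxels d K" "v \<in> voxels d K"
    and dist: "linf_center_dist d K u v \<le> real i / real K"
    unfolding lto_edges_def by blast
  have "\<bar>int (v ! k) - int (u ! k)\<bar> \<le> int i" if "k < d" for k
    using index_dist_le_if_linf_center_dist_le[OF dist \<open>0 < K\<close> that] \<open>0 < K\<close> by simp
  moreover have "length v = d"
    using uv unfolding voxels_def by simp
  ultimately have "v \<in> index_box d i u"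
    unfolding index_box_def by blast
  then show "e \<in> (\<lambda>(u, v). {u, v}) ` (SIGMA u:voxels d K. index_box d i u)"
    using e uv by force
qed

lemma finite_lto_edges:
  assumes "0 < K"
  shows "finite (lto_edges d K (real i / real K))"
  using lto_edges_subset_index_boxes[OF assms] finite_voxels finite_index_box_card_le
  by (meson finite_SigmaI finite_imageI finite_subset)

lemma card_lto_edges_le:
  assumes "0 < K"
  shows "card (lto_edges d K (real i / real K)) \<le> K ^ d * (2 * i + 1) ^ d"
proof -
  let ?S = "SIGMA u:voxels d K. index_box d i u"
  have "finite ?S"
    using finite_voxels finite_index_box_card_le by blast
  then have "card (lto_edges d K (real i / real K)) \<le> card ?S"
    using lto_edges_subset_index_boxes[OF assms]
    by (meson card_image_le card_mono finite_imageI le_trans)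
  also have "card ?S = (\<Sum>u\<in>voxels d K. card (index_box d i u))"
    using finite_voxels finite_index_box_card_le by (simp add: card_SigmaI)
  also have "\<dots> \<le> K ^ d * (2 * i + 1) ^ d"
    using sum_bounded_above[of "voxels d K" "\<lambda>u. card (index_box d i u)" "(2 * i + 1) ^ d"]
      finite_index_box_card_le
    by (simp add: card_voxels)
  finally show ?thesis .
qed

lemma card_lto_graph_problems_le:
  assumes "0 < K"
  shows "card (lto_graph_problems d K (real i / real K)) \<le> 2 * ((2 * i + 1) ^ d * K ^ d)"
proof -
  let ?E = "lto_edges d K (real i / real K)"
  have "card (lto_graph_problems d K (real i / real K))
          \<le> card (Vertex_TO ` voxels d K) + card (Edge_TO ` ?E)"
    unfolding lto_graph_problems_def by (rule card_Un_le)
  also have "\<dots> \<le> card (voxels d K) + card ?E"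
    by (intro add_mono card_image_le finite_voxels finite_lto_edges[OF assms])
  also have "\<dots> \<le> K ^ d + K ^ d * (2 * i + 1) ^ d"
    using card_lto_edges_le[OF assms] by (simp add: card_voxels)
  also have "\<dots> \<le> 2 * ((2 * i + 1) ^ d * K ^ d)"
    by simp
  finally show ?thesis .
qed

lemma finite_lto_graph_problems:
  assumes "0 < K"
  shows "finite (lto_graph_problems d K (real i / real K))"
  unfolding lto_graph_problems_def
  using finite_voxels finite_lto_edges[OF assms] by simp

lemma TO_aware_time_le_card_problems:
  assumes "lto_TO_log d K r log" and "finite (lto_graph_problems d K r)"
  shows "TO_aware_time log \<le> card (lto_graph_problems d K r)"
  using assms distinct_card[of log] card_mono[of "lto_graph_problems d K r" "set log"]
  unfolding lto_TO_log_def TO_aware_time_def by simp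

text \<open>The bound holds with \<open>C = 2\<close>.\<close>

theorem theorem1:
  "\<exists>C::real. \<forall>(d::nat) (K::nat) (i::nat) log.
      1 \<le> K \<longrightarrow> i \<le> K \<longrightarrow> lto_TO_log d K (real i / real K) log \<longrightarrow>
      real (TO_aware_time log) \<le> C * real ((2 * i + 1) ^ d * K ^ d)"
proof (intro exI[of _ 2] allI impI)
  fix d K i :: nat and log
  assume "1 \<le> K" and "lto_TO_log d K (real i / real K) log"
  then have "TO_aware_time log \<le> 2 * ((2 * i + 1) ^ d * K ^ d)"
    using TO_aware_time_le_card_problems finite_lto_graph_problems card_lto_graph_problems_le
    by (meson le_trans less_le_trans zero_less_one)
  then show "real (TO_aware_time log) \<le> 2 * real ((2 * i + 1) ^ d * K ^ d)"
    by (metis of_nat_le_iff of_nat_mult of_nat_numeral)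
qed

end
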